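(* Let $r_{\mathrm c}>0$, let $w_{\mathrm c}(\lambda)=\sqrt{\lambda(\lambda-4r_{\mathrm c})}$ be the branch analytic in $|\lambda|>4r_{\mathrm c}$ with $w_{\mathrm c}\sim\lambda$ at infinity, let $I\subset\mathbb{R}$ be an open interval, and for $j\ge 1$ let $f_j(\lambda)=(\lambda-4r_{\mathrm c})/\lambda^{j}$ and $g_j(\lambda)=\lambda/(\lambda-4r_{\mathrm c})^{j}$. Let $\mathfrak a(\bar\epsilon,x)=r_{\mathrm c}+\sum_{k\ge1}\mathfrak a_k(x)\bar\epsilon^k$ with $\mathfrak a_k\in C^\infty(I)$, and let $\mathbb V(\lambda,\bar\epsilon;x)=\sum_{k\ge0}\mathbb V^{[k]}(\lambda,x)\bar\epsilon^k$ with $\mathbb V^{[0]}=\lambda/w_{\mathrm c}$ satisfy, as formal power series in $\bar\epsilon$, $$\mathfrak a(\bar\epsilon,x)\big(\mathbb V(\lambda,\bar\epsilon;x)+\mathbb V(\lambda,-\bar\epsilon;x-\bar\epsilon)\big)\big(\mathbb V(\lambda,\bar\epsilon;x)+\mathbb V(\lambda,-\bar\epsilon;x+\bar\epsilon)\big)=\lambda\big(\mathbb V(\lambda,\bar\epsilon;x)^2-1\big).$$ Suppose moreover that $$\mathbb V=\frac{1}{w_{\mathrm c}}\Big(\lambda+\mathbb V_0+\sum_{j\ge1}\big(f_j(\lambda)\mathbb V_0^{[j]}+g_j(\lambda)\mathbb V_1^{[j]}\big)\Big),$$ where $\mathbb V_0(\bar\epsilon;x)$, $\mathbb V_0^{[j]}(\bar\epsilon;x)$,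 $\mathbb V_1^{[j]}(\bar\epsilon;x)$ are $\lambda$-independent formal power series in $\bar\epsilon$ with $C^\infty(I)$ coefficients, $\mathbb V_0=O(\bar\epsilon)$ and $\mathbb V_0^{[j]},\mathbb V_1^{[j]}=O(\bar\epsilon^{2j})$. Writing $y=x-\bar\epsilon/2$ and $y'=x-3\bar\epsilon/2$, the following formal series in $\bar\epsilon$ are even functions of $\bar\epsilon$ (for every $j\ge1$ where $j$ appears): $$\mathbb V_0(\bar\epsilon;y)+\mathbb V_0^{[1]}(\bar\epsilon;y)+\mathbb V_1^{[1]}(\bar\epsilon;y)-2\mathfrak a(\bar\epsilon,y),$$ $$4r_{\mathrm c}\mathbb V_0^{[1]}(\bar\epsilon;y)+\mathfrak a(\bar\epsilon,y)\big[\mathbb V_0(\bar\epsilon;y)+\mathbb V_0(-\bar\epsilon;y')\big],$$ $$\mathbb V_0^{[j+1]}(\bar\epsilon;y)-\mathfrak a(\bar\epsilon,y)\big[\mathbb V_0^{[j]}(\bar\epsilon;y)+\mathbb V_0^{[j]}(-\bar\epsilon;y')\big],$$ $$4r_{\mathrm c}\mathbb V_1^{[j]}(\bar\epsilon;y)+\mathbb V_1^{[j+1]}(\bar\epsilon;y)-\mathfrak a(\bar\epsilon,y)\big[\mathbb V_1^{[j]}(\bar\epsilon;y)+\mathbb V_1^{[j]}(-\bar\epsilon;y')\big].$$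
   Context: Shifted and sign-reversed series are understood formally: for $F(\bar\epsilon;x)=\sum_kF_k(x)\bar\epsilon^k$ and constants $c$, $F(\pm\bar\epsilon;x+c\bar\epsilon)=\sum_{k,n}(\pm1)^kF_k^{(n)}(x)c^n\bar\epsilon^{k+n}/n!$. "Even function of $\bar\epsilon$" means that all coefficients of odd powers of $\bar\epsilon$ vanish. The condition $\mathbb V_0^{[j]},\mathbb V_1^{[j]}=O(\bar\epsilon^{2j})$ makes each coefficient of $\bar\epsilon^k$ in the representation of $\mathbb V$ a finite sum. *)

theory Defs
  imports "HOL-Analysis.Analysis"
begin

text \<open>Formal power series in the small parameter are represented by their coefficient
  sequences.  A series whose coefficients depend on x is a map nat => real => 'a.\<close>

definition vderiv :: "(real \<Rightarrow> 'a::real_normed_vector) \<Rightarrow> real \<Rightarrow> 'a" where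
  "vderiv f = (\<lambda>x. vector_derivative f (at x))"

definition smooth_on :: "real set \<Rightarrow> (real \<Rightarrow> 'a::real_normed_vector) \<Rightarrow> bool" where
  "smooth_on I f \<longleftrightarrow> (\<forall>n. \<forall>x\<in>I. (vderiv ^^ n) f differentiable (at x))"

text \<open>Formal shift / sign reversal: coefficient sequence of F(sigma*eps; x + c*eps), namely
  coefficient of eps^k is sum over n <= k of sigma^(k-n) F_(k-n)^(n)(x) c^n / n!.\<close>
definition sshift :: "real \<Rightarrow> real \<Rightarrow> (nat \<Rightarrow> real \<Rightarrow> 'a::real_normed_vector) \<Rightarrow> nat \<Rightarrow> real \<Rightarrow> 'a" where
  "sshift \<sigma> c F k x = (\<Sum>n\<le>k. (\<sigma> ^ (k - n) * c ^ n / fact n) *\<^sub>R (vderiv ^^ n) (F (k - n)) x)"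

definition cprod :: "(nat \<Rightarrow> 'a::comm_ring) \<Rightarrow> (nat \<Rightarrow> 'a) \<Rightarrow> nat \<Rightarrow> 'a" where
  "cprod s t k = (\<Sum>i\<le>k. s i * t (k - i))"

definition even_series :: "(nat \<Rightarrow> 'a::zero) \<Rightarrow> bool" where
  "even_series s \<longleftrightarrow> (\<forall>k. odd k \<longrightarrow> s k = 0)"

text \<open>The branch of sqrt(lambda (lambda - 4 r)) analytic in |lambda| > 4 r with w ~ lambda
  at infinity (principal square root of 1 - 4r/lambda, which has positive real part there).\<close>
definition wc :: "real \<Rightarrow> complex \<Rightarrow> complex" where
  "wc r lam = lam * csqrt (1 - complex_of_real (4 * r) / lam)"

definition fj :: "real \<Rightarrow> nat \<Rightarrow> complex \<Rightarrow> complex" where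
  "fj r j lam = (lam - complex_of_real (4 * r)) / lam ^ j"

definition gj :: "real \<Rightarrow> nat \<Rightarrow> complex \<Rightarrow> complex" where
  "gj r j lam = lam / (lam - complex_of_real (4 * r)) ^ j"

end

theory Submission
  imports Defs "HOL-Complex_Analysis.Conformal_Mappings" "HOL-Computational_Algebra.Formal_Power_Series"
begin

text \<open>Put \<open>Y(\<epsilon>) = V(\<epsilon>; x - \<epsilon>/2)\<close> and \<open>B(\<epsilon>) = V(-\<epsilon>; x - 3\<epsilon>/2)\<close>.
  Evaluated at \<open>x - \<epsilon>/2\<close>, the functional equation becomes
  \<open>a (Y + B) (Y + Y(-\<epsilon>)) = \<lambda> (Y\<^sup>2 - 1)\<close>, an identity of power series in \<open>\<epsilon>\<close>.
  Hence \<open>(a (Y + B) - \<lambda> Y) (Y + Y(-\<epsilon>)) = -\<lambda> - \<lambda> Y Y(-\<epsilon>)\<close> is even, and since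
  \<open>Y + Y(-\<epsilon>)\<close> is even with nonzero constant term, so is \<open>a (Y + B) - \<lambda> Y\<close>.
  Inserting the expansion of \<open>V\<close> and using \<open>\<lambda> f\<^sub>j\<^sub>+\<^sub>1 = f\<^sub>j\<close> and
  \<open>(\<lambda> - 4r) g\<^sub>j\<^sub>+\<^sub>1 = g\<^sub>j\<close>, each odd coefficient of \<open>w (a (Y + B) - \<lambda> Y)\<close> is a
  combination of \<open>\<lambda>, 1, f\<^sub>j, g\<^sub>j\<close> whose coefficients are, up to sign, the odd coefficients
  of the four series of the statement. These functions are linearly independent on
  \<open>|\<lambda>| > 4r\<close>, because clearing denominators gives a polynomial vanishing on an open set.\<close>

section \<open>Iterated derivatives of smooth functions\<close>

lemma vderiv_at: "(f has_vector_derivative D) (at x) \<Longrightarrow> vderiv f x = D"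
  unfolding vderiv_def by (rule vector_derivative_at)

lemma higher_vderiv_higher_vderiv: "(vderiv ^^ n) ((vderiv ^^ m) f) = (vderiv ^^ (n + m)) f"
  by (simp add: funpow_add)

lemma vderiv_cong_open:
  assumes "open I" "x \<in> I" "\<And>y. y \<in> I \<Longrightarrow> f y = g y"
  shows "vderiv f x = vderiv g x"
proof -
  have "(f has_vector_derivative D) (at x) \<longleftrightarrow> (g has_vector_derivative D) (at x)" for D
    using has_vector_derivative_transform_within_open[of f D x I g]
      has_vector_derivative_transform_within_open[of g D x I f] assms by auto
  then show ?thesis unfolding vderiv_def vector_derivative_def by simp
qed

lemma higher_vderiv_cong_open:
  assumes "open I" "\<And>y. y \<in> I \<Longrightarrow> f y = g y" "x \<in> I"
  shows "(vderiv ^^ n) f x = (vderiv ^^ n) g x"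
  using assms(3)
proof (induction n arbitrary: x)
  case (Suc n)
  then show ?case
    using vderiv_cong_open[OF assms(1) Suc.prems, of "(vderiv ^^ n) f" "(vderiv ^^ n) g"] by simp
qed (use assms in simp)

lemma differentiable_cong_open:
  assumes "f differentiable (at x)" "open I" "x \<in> I" "\<And>y. y \<in> I \<Longrightarrow> f y = g y"
  shows "g differentiable (at x)"
  using assms has_derivative_transform_within_open unfolding differentiable_def by blast

lemma smooth_on_cong:
  assumes "open I" "smooth_on I f" "\<And>y. y \<in> I \<Longrightarrow> f y = g y"
  shows "smooth_on I g"
  unfolding smooth_on_def
proof (intro allI ballI)
  fix n x assume x: "x \<in> I"
  have "(vderiv ^^ n) f differentiable (at x)" using assms(2) x by (simp add: smooth_on_def)
  then show "(vderiv ^^ n) g differentiable (at x)"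
    by (rule differentiable_cong_open[OF _ assms(1) x]) (rule higher_vderiv_cong_open[OF assms(1,3)])
qed

lemma smooth_on_higher_vderiv: "smooth_on I f \<Longrightarrow> smooth_on I ((vderiv ^^ m) f)"
  unfolding smooth_on_def by (simp add: higher_vderiv_higher_vderiv)

lemma smooth_on_has_higher_vderiv:
  "smooth_on I f \<Longrightarrow> x \<in> I \<Longrightarrow> ((vderiv ^^ n) f has_vector_derivative (vderiv ^^ Suc n) f x) (at x)"
  unfolding smooth_on_def by (simp add: vderiv_def vector_derivative_works[symmetric])

lemma higher_vderiv_linear:
  assumes "open I" "smooth_on I f" "bounded_linear L" "x \<in> I"
  shows "(vderiv ^^ n) (\<lambda>y. L (f y)) x = L ((vderiv ^^ n) f x)"
  using assms(4)
proof (induction n arbitrary: x)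
  case (Suc n)
  have "(vderiv ^^ Suc n) (\<lambda>y. L (f y)) x = vderiv (\<lambda>y. L ((vderiv ^^ n) f y)) x"
    using vderiv_cong_open[OF assms(1) Suc.prems, of "(vderiv ^^ n) (\<lambda>y. L (f y))"] Suc.IH by simp
  also have "\<dots> = L ((vderiv ^^ Suc n) f x)"
    by (intro vderiv_at bounded_linear.has_vector_derivative[OF assms(3)]
        smooth_on_has_higher_vderiv[OF assms(2) Suc.prems])
  finally show ?case .
qed simp

lemma smooth_on_linear:
  assumes "open I" "smooth_on I f" "bounded_linear L"
  shows "smooth_on I (\<lambda>y. L (f y))"
  unfolding smooth_on_def
proof (intro allI ballI)
  fix n x assume x: "x \<in> I"
  have "(\<lambda>y. L ((vderiv ^^ n) f y)) differentiable (at x)"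
    using bounded_linear.has_vector_derivative[OF assms(3) smooth_on_has_higher_vderiv[OF assms(2) x]]
    unfolding has_vector_derivative_def differentiable_def by blast
  then show "(vderiv ^^ n) (\<lambda>y. L (f y)) differentiable (at x)"
    by (rule differentiable_cong_open[OF _ assms(1) x]) (simp add: higher_vderiv_linear[OF assms])
qed

lemma higher_vderiv_add:
  assumes "open I" "smooth_on I f" "smooth_on I g" "x \<in> I"
  shows "(vderiv ^^ n) (\<lambda>y. f y + g y) x = (vderiv ^^ n) f x + (vderiv ^^ n) g x"
  using assms(4)
proof (induction n arbitrary: x)
  case (Suc n)
  have "(vderiv ^^ Suc n) (\<lambda>y. f y + g y) x = vderiv (\<lambda>y. (vderiv ^^ n) f y + (vderiv ^^ n) g y) x"
    using vderiv_cong_open[OF assms(1) Suc.prems, of "(vderiv ^^ n) (\<lambda>y. f y + g y)"] Suc.IH by simp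
  also have "\<dots> = (vderiv ^^ Suc n) f x + (vderiv ^^ Suc n) g x"
    by (intro vderiv_at has_vector_derivative_add smooth_on_has_higher_vderiv[OF assms(2) Suc.prems]
        smooth_on_has_higher_vderiv[OF assms(3) Suc.prems])
  finally show ?case .
qed simp

lemma smooth_on_add:
  assumes "open I" "smooth_on I f" "smooth_on I g"
  shows "smooth_on I (\<lambda>y. f y + g y)"
  unfolding smooth_on_def
proof (intro allI ballI)
  fix n x assume x: "x \<in> I"
  have "(\<lambda>y. (vderiv ^^ n) f y + (vderiv ^^ n) g y) differentiable (at x)"
    using has_vector_derivative_add[OF smooth_on_has_higher_vderiv[OF assms(2) x]
        smooth_on_has_higher_vderiv[OF assms(3) x]]
    unfolding has_vector_derivative_def differentiable_def by blast
  then show "(vderiv ^^ n) (\<lambda>y. f y + g y) differentiable (at x)"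
    by (rule differentiable_cong_open[OF _ assms(1) x]) (simp add: higher_vderiv_add[OF assms])
qed

lemma higher_vderiv_const: "(vderiv ^^ n) (\<lambda>y. c) = (\<lambda>y. if n = 0 then c else 0)"
  by (induction n) (auto simp: vderiv_def)

lemma smooth_on_const: "smooth_on I (\<lambda>y. c)"
  unfolding smooth_on_def higher_vderiv_const by simp

lemma smooth_on_sum:
  assumes "open I" "finite A" "\<And>i. i \<in> A \<Longrightarrow> smooth_on I (f i)"
  shows "smooth_on I (\<lambda>y. \<Sum>i\<in>A. f i y)"
  using assms(2,3)
  by (induction A rule: finite_induct) (auto intro: smooth_on_const smooth_on_add[OF assms(1)])

lemma higher_vderiv_sum:
  assumes "open I" "finite A" "\<And>i. i \<in> A \<Longrightarrow> smooth_on I (f i)" "x \<in> I"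
  shows "(vderiv ^^ n) (\<lambda>y. \<Sum>i\<in>A. f i y) x = (\<Sum>i\<in>A. (vderiv ^^ n) (f i) x)"
  using assms(2,3)
proof (induction A rule: finite_induct)
  case (insert i A)
  then show ?case
    using higher_vderiv_add[OF assms(1) _ smooth_on_sum[OF assms(1)] assms(4), of "f i" A f]
    by simp
qed (simp add: higher_vderiv_const)

lemma leibniz_sum_Suc:
  fixes P :: "nat \<Rightarrow> nat \<Rightarrow> 'a::semiring_1"
  shows "(\<Sum>i\<le>n. of_nat (n choose i) * (P i (Suc (n - i)) + P (Suc i) (n - i)))
       = (\<Sum>i\<le>Suc n. of_nat (Suc n choose i) * P i (Suc n - i))"
proof -
  have "(\<Sum>i\<le>n. of_nat (n choose i) * P i (Suc (n - i)))
      = P 0 (Suc n) + (\<Sum>i<n. of_nat (n choose Suc i) * P (Suc i) (n - i))"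
    by (subst sum.atMost_shift) (auto intro!: sum.cong simp: Suc_diff_Suc)
  also have "(\<Sum>i<n. of_nat (n choose Suc i) * P (Suc i) (n - i))
           = (\<Sum>i\<le>n. of_nat (n choose Suc i) * P (Suc i) (n - i))"
    by (simp add: binomial_eq_0 flip: lessThan_Suc_atMost)
  finally show ?thesis
    by (subst sum.atMost_Suc_shift) (simp add: algebra_simps sum.distrib)
qed

lemma higher_vderiv_mult:
  fixes f g :: "real \<Rightarrow> 'a::real_normed_algebra_1"
  assumes "open I" "smooth_on I f" "smooth_on I g" "x \<in> I"
  shows "(vderiv ^^ n) (\<lambda>y. f y * g y) x
       = (\<Sum>i\<le>n. of_nat (n choose i) * ((vderiv ^^ i) f x * (vderiv ^^ (n - i)) g x))"
  using assms(4)
proof (induction n arbitrary: x)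
  case (Suc n)
  have "(vderiv ^^ Suc n) (\<lambda>y. f y * g y) x
      = vderiv (\<lambda>y. \<Sum>i\<le>n. of_nat (n choose i) * ((vderiv ^^ i) f y * (vderiv ^^ (n - i)) g y)) x"
    using vderiv_cong_open[OF assms(1) Suc.prems, of "(vderiv ^^ n) (\<lambda>y. f y * g y)"] Suc.IH
    by simp
  also have "\<dots> = (\<Sum>i\<le>n. of_nat (n choose i) * ((vderiv ^^ i) f x * (vderiv ^^ Suc (n - i)) g x
                 + (vderiv ^^ Suc i) f x * (vderiv ^^ (n - i)) g x))"
    by (intro vderiv_at has_vector_derivative_sum has_vector_derivative_mult_right
        has_vector_derivative_mult smooth_on_has_higher_vderiv[OF assms(2) Suc.prems]
        smooth_on_has_higher_vderiv[OF assms(3) Suc.prems])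
  also have "\<dots> = (\<Sum>i\<le>Suc n. of_nat (Suc n choose i) * ((vderiv ^^ i) f x * (vderiv ^^ (Suc n - i)) g x))"
    by (rule leibniz_sum_Suc)
  finally show ?case .
qed simp

lemma smooth_on_mult:
  fixes f g :: "real \<Rightarrow> 'a::real_normed_algebra_1"
  assumes "open I" "smooth_on I f" "smooth_on I g"
  shows "smooth_on I (\<lambda>y. f y * g y)"
  unfolding smooth_on_def
proof (intro allI ballI)
  fix n x assume x: "x \<in> I"
  have "((\<lambda>y. \<Sum>i\<le>n. of_nat (n choose i) * ((vderiv ^^ i) f y * (vderiv ^^ (n - i)) g y))
      has_vector_derivative (\<Sum>i\<le>n. of_nat (n choose i) * ((vderiv ^^ i) f x * (vderiv ^^ Suc (n - i)) g x
                 + (vderiv ^^ Suc i) f x * (vderiv ^^ (n - i)) g x))) (at x)"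
    by (intro has_vector_derivative_sum has_vector_derivative_mult_right has_vector_derivative_mult
        smooth_on_has_higher_vderiv[OF assms(2) x] smooth_on_has_higher_vderiv[OF assms(3) x])
  then have "(\<lambda>y. \<Sum>i\<le>n. of_nat (n choose i) * ((vderiv ^^ i) f y * (vderiv ^^ (n - i)) g y))
      differentiable (at x)"
    unfolding has_vector_derivative_def differentiable_def by blast
  then show "(vderiv ^^ n) (\<lambda>y. f y * g y) differentiable (at x)"
    by (rule differentiable_cong_open[OF _ assms(1) x]) (simp add: higher_vderiv_mult[OF assms])
qed

section \<open>Shifted and reflected series\<close>

lemma sshift_cong:
  assumes "open I" "x \<in> I" "\<And>m y. m \<le> k \<Longrightarrow> y \<in> I \<Longrightarrow> F m y = G m y"
  shows "sshift \<sigma> c F k x = sshift \<sigma> c G k x"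
  unfolding sshift_def
  by (intro sum.cong refl arg_cong2[where f=scaleR] higher_vderiv_cong_open[OF assms(1) _ assms(2)])
    (simp add: assms(3))

lemma sshift_add:
  assumes "open I" "x \<in> I" "\<And>m. smooth_on I (F m)" "\<And>m. smooth_on I (G m)"
  shows "sshift \<sigma> c (\<lambda>m y. F m y + G m y) k x = sshift \<sigma> c F k x + sshift \<sigma> c G k x"
  unfolding sshift_def
  by (simp add: higher_vderiv_add[OF assms(1,3,4,2)] scaleR_add_right sum.distrib)

lemma sshift_linear:
  assumes "open I" "x \<in> I" "\<And>m. smooth_on I (F m)" "bounded_linear L"
  shows "sshift \<sigma> c (\<lambda>m y. L (F m y)) k x = L (sshift \<sigma> c F k x)"
  unfolding sshift_def
  using assms(4)[THEN bounded_linear.linear]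
  by (simp add: higher_vderiv_linear[OF assms(1,3,4,2)] linear_sum linear_cmul)

lemma sshift_sum:
  assumes "open I" "x \<in> I" "finite A" "\<And>j m. j \<in> A \<Longrightarrow> smooth_on I (F j m)"
  shows "sshift \<sigma> c (\<lambda>m y. \<Sum>j\<in>A. F j m y) k x = (\<Sum>j\<in>A. sshift \<sigma> c (F j) k x)"
  unfolding sshift_def
  by (simp add: higher_vderiv_sum[OF assms(1,3) assms(4) assms(2)] scaleR_sum_right sum.swap[of _ A])

lemma sshift_const: "sshift \<sigma> c (\<lambda>m y. C m) k x = (\<sigma> ^ k) *\<^sub>R C k"
  unfolding sshift_def higher_vderiv_const by (simp add: if_distrib[of "scaleR _"] cong: if_cong)

lemma sshift_eq_0:
  assumes "open I" "x \<in> I" "\<And>m y. m \<le> k \<Longrightarrow> y \<in> I \<Longrightarrow> F m y = 0"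
  shows "sshift \<sigma> c F k x = 0"
  using sshift_cong[OF assms(1,2), of k F "\<lambda>m y. 0"] assms(3) sshift_const[of \<sigma> c "\<lambda>m. 0"] by simp

lemma sshift_uminus: "sshift (- \<sigma>) (- c) F k x = ((-1) ^ k) *\<^sub>R sshift \<sigma> c F k x"
  unfolding sshift_def scaleR_sum_right scaleR_scaleR
proof (intro sum.cong refl arg_cong2[where f=scaleR])
  fix n assume "n \<in> {..k}"
  then have "(-1::real) ^ k = (-1) ^ (k - n) * (-1) ^ n"
    by (simp flip: power_add)
  then show "(- \<sigma>) ^ (k - n) * (- c) ^ n / fact n = (-1) ^ k * (\<sigma> ^ (k - n) * c ^ n / fact n)"
    by (simp add: power_minus[of \<sigma>] power_minus[of c])
qed

lemma smooth_on_sshift: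
  assumes "open I" "\<And>m. smooth_on I (F m)"
  shows "smooth_on I (sshift \<sigma> c F k)"
proof -
  have "smooth_on I (\<lambda>y. \<Sum>n\<le>k. (\<sigma> ^ (k - n) * c ^ n / fact n) *\<^sub>R (vderiv ^^ n) (F (k - n)) y)"
    by (intro smooth_on_sum[OF assms(1) finite_atMost] smooth_on_linear[OF assms(1)
          smooth_on_higher_vderiv[OF assms(2)] bounded_linear_scaleR_right])
  then show ?thesis by (simp add: sshift_def[abs_def])
qed

lemma higher_vderiv_sshift:
  assumes "open I" "x \<in> I" "\<And>m. smooth_on I (F m)"
  shows "(vderiv ^^ p) (sshift \<sigma> c F k) x = sshift \<sigma> c (\<lambda>m. (vderiv ^^ p) (F m)) k x"
proof -
  have "(vderiv ^^ p) (sshift \<sigma> c F k) x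
      = (\<Sum>n\<le>k. (vderiv ^^ p) (\<lambda>y. (\<sigma> ^ (k - n) * c ^ n / fact n) *\<^sub>R (vderiv ^^ n) (F (k - n)) y) x)"
    unfolding sshift_def[abs_def]
    by (intro higher_vderiv_sum[OF assms(1) finite_atMost _ assms(2)] smooth_on_linear[OF assms(1)
          smooth_on_higher_vderiv[OF assms(3)] bounded_linear_scaleR_right])
  then show ?thesis
    by (simp add: sshift_def higher_vderiv_linear[OF assms(1) smooth_on_higher_vderiv[OF assms(3)]
          bounded_linear_scaleR_right assms(2)] higher_vderiv_higher_vderiv add.commute)
qed

lemma sum_triangle_swap:
  fixes k :: nat
  shows "(\<Sum>n\<le>k. \<Sum>p\<le>k - n. g n p) = (\<Sum>q\<le>k. \<Sum>n\<le>q. g n (q - n))"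
proof -
  have "(\<Sum>n\<le>k. \<Sum>p\<le>k - n. g n p) = (\<Sum>(n,p)\<in>Sigma {..k} (\<lambda>n. {..k - n}). g n p)"
    by (rule sum.Sigma) auto
  also have "Sigma {..k} (\<lambda>n. {..k - n}) = {(i,j). i + j \<le> k}" by auto
  also have "(\<Sum>(n,p)\<in>{(i,j). i + j \<le> k}. g n p) = (\<Sum>q\<le>k. \<Sum>n\<le>q. g n (q - n))"
    by (rule sum.triangle_reindex_eq)
  finally show ?thesis .
qed

text \<open>Reading \<open>sshift \<sigma> c F\<close> as \<open>F(\<sigma>\<epsilon>; x + c\<epsilon>)\<close>, this is the substitution
  \<open>\<epsilon> \<mapsto> \<sigma>\<epsilon>, x \<mapsto> x + c\<epsilon>\<close> in \<open>F(\<sigma>'\<epsilon>; x + c'\<epsilon>)\<close>.\<close>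

lemma sshift_sshift:
  assumes "open I" "x \<in> I" "\<And>m. smooth_on I (F m)"
  shows "sshift \<sigma> c (sshift \<sigma>' c' F) k x = sshift (\<sigma> * \<sigma>') (c + \<sigma> * c') F k x"
proof -
  have coeff: "(\<sigma> ^ (k - n) * c ^ n / fact n) * (\<sigma>' ^ (k - n - (q - n)) * c' ^ (q - n) / fact (q - n))
      = (\<sigma> * \<sigma>') ^ (k - q) * (of_nat (q choose n) * c ^ n * (\<sigma> * c') ^ (q - n)) / fact q"
    if "n \<le> q" "q \<le> k" for n q
  proof -
    have "\<sigma> ^ (k - n) = \<sigma> ^ (k - q) * \<sigma> ^ (q - n)" "k - n - (q - n) = k - q"
      using that by (simp_all flip: power_add)
    moreover have "(of_nat (q choose n) :: real) = fact q / (fact n * fact (q - n))"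
      using binomial_fact[OF that(1)] by simp
    ultimately show ?thesis by (simp add: field_simps)
  qed
  have "sshift \<sigma> c (sshift \<sigma>' c' F) k x
      = (\<Sum>n\<le>k. \<Sum>p\<le>k - n. ((\<sigma> ^ (k - n) * c ^ n / fact n) * (\<sigma>' ^ (k - n - p) * c' ^ p / fact p))
                 *\<^sub>R (vderiv ^^ (p + n)) (F (k - n - p)) x)"
    unfolding sshift_def[of \<sigma> c] higher_vderiv_sshift[OF assms]
    by (simp add: sshift_def scaleR_sum_right higher_vderiv_higher_vderiv)
  also have "\<dots> = (\<Sum>q\<le>k. \<Sum>n\<le>q. ((\<sigma> * \<sigma>') ^ (k - q) * (of_nat (q choose n) * c ^ n * (\<sigma> * c') ^ (q - n)) / fact q)
                 *\<^sub>R (vderiv ^^ q) (F (k - q)) x)"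
    unfolding sum_triangle_swap
  proof (intro sum.cong refl)
    fix q n assume "q \<in> {..k}" "n \<in> {..q}"
    moreover have "q - n + n = q" "k - n - (q - n) = k - q" using \<open>n \<in> {..q}\<close> \<open>q \<in> {..k}\<close> by auto
    ultimately show "((\<sigma> ^ (k - n) * c ^ n / fact n) * (\<sigma>' ^ (k - n - (q - n)) * c' ^ (q - n) / fact (q - n)))
                 *\<^sub>R (vderiv ^^ (q - n + n)) (F (k - n - (q - n))) x
       = ((\<sigma> * \<sigma>') ^ (k - q) * (of_nat (q choose n) * c ^ n * (\<sigma> * c') ^ (q - n)) / fact q)
                 *\<^sub>R (vderiv ^^ q) (F (k - q)) x"
      using coeff[of n q] by simp
  qed
  also have "\<dots> = sshift (\<sigma> * \<sigma>') (c + \<sigma> * c') F k x"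
    unfolding sshift_def binomial_ring
    by (simp add: scaleR_sum_left[symmetric] sum_divide_distrib sum_distrib_left)
  finally show ?thesis .
qed

lemma smooth_on_cprod:
  fixes F G :: "nat \<Rightarrow> real \<Rightarrow> 'a::{real_normed_algebra_1, comm_ring_1}"
  assumes "open I" "\<And>m. smooth_on I (F m)" "\<And>m. smooth_on I (G m)"
  shows "smooth_on I (\<lambda>y. cprod (\<lambda>k. F k y) (\<lambda>k. G k y) k)"
  unfolding cprod_def
  by (intro smooth_on_sum[OF assms(1) finite_atMost] smooth_on_mult[OF assms(1)] assms(2,3))

text \<open>By the Leibniz rule both sides expand into the same triple sum, indexed by
  \<open>(n, i, a)\<close> on the left and by \<open>(m, a, b)\<close> on the right, where \<open>m = a + i\<close> and \<open>n = a + b\<close>.\<close>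

lemma sshift_cprod:
  fixes F G :: "nat \<Rightarrow> real \<Rightarrow> 'a::{real_normed_algebra_1, comm_ring_1}"
  assumes "open I" "x \<in> I" "\<And>m. smooth_on I (F m)" "\<And>m. smooth_on I (G m)"
  shows "sshift \<sigma> c (\<lambda>k y. cprod (\<lambda>k. F k y) (\<lambda>k. G k y) k) k x
       = cprod (\<lambda>k. sshift \<sigma> c F k x) (\<lambda>k. sshift \<sigma> c G k x) k"
proof -
  define h1 where "h1 = (\<lambda>(n, i, a). (\<sigma> ^ (k - n) * c ^ n / fact n) *\<^sub>R
        (of_nat (n choose a) * ((vderiv ^^ a) (F i) x * (vderiv ^^ (n - a)) (G (k - n - i)) x)))"
  define h2 where "h2 = (\<lambda>(m, a, b). ((\<sigma> ^ (m - a) * c ^ a / fact a) * (\<sigma> ^ (k - m - b) * c ^ b / fact b)) *\<^sub>R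
        ((vderiv ^^ a) (F (m - a)) x * (vderiv ^^ b) (G (k - m - b)) x))"
  define S1 where "S1 = (SIGMA n:{..k}. SIGMA i:{..k - n}. {..n})"
  define S2 where "S2 = (SIGMA m:{..k}. SIGMA a:{..m}. {..k - m})"
  have "sshift \<sigma> c (\<lambda>k y. cprod (\<lambda>k. F k y) (\<lambda>k. G k y) k) k x
      = (\<Sum>n\<le>k. \<Sum>i\<le>k - n. \<Sum>a\<le>n. h1 (n, i, a))"
    unfolding sshift_def cprod_def h1_def
    by (simp add: higher_vderiv_sum[OF assms(1) finite_atMost smooth_on_mult[OF assms(1,3,4)] assms(2)]
        higher_vderiv_mult[OF assms(1,3,4,2)] scaleR_sum_right)
  also have "\<dots> = sum h1 S1"
    unfolding S1_def by (simp add: sum.Sigma split_def)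
  also have "\<dots> = sum h2 S2"
  proof (rule sum.reindex_bij_witness[where j="\<lambda>(n, i, a). (a + i, a, n - a)"
        and i="\<lambda>(m, a, b). (a + b, m - a, a)"])
    fix p assume "p \<in> S1"
    then obtain n i a where p: "p = (n, i, a)" "n \<le> k" "i \<le> k - n" "a \<le> n"
      by (auto simp: S1_def)
    have coeff: "(\<sigma> ^ (k - n) * c ^ n / fact n) * of_nat (n choose a)
        = (\<sigma> ^ i * c ^ a / fact a) * (\<sigma> ^ (k - n - i) * c ^ (n - a) / fact (n - a))"
    proof -
      have "\<sigma> ^ (k - n) = \<sigma> ^ i * \<sigma> ^ (k - n - i)" "c ^ n = c ^ a * c ^ (n - a)"
        using p by (simp_all flip: power_add)
      moreover have "(of_nat (n choose a) :: real) = fact n / (fact a * fact (n - a))"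
        using binomial_fact[OF p(4)] by simp
      ultimately show ?thesis by (simp add: field_simps)
    qed
    define X where "X = (vderiv ^^ a) (F i) x * (vderiv ^^ (n - a)) (G (k - n - i)) x"
    have "k - (a + i) - (n - a) = k - n - i" "a + i - a = i" using p by auto
    then have "h2 (case p of (n, i, a) \<Rightarrow> (a + i, a, n - a))
        = ((\<sigma> ^ i * c ^ a / fact a) * (\<sigma> ^ (k - n - i) * c ^ (n - a) / fact (n - a))) *\<^sub>R X"
      unfolding h2_def X_def p(1) by simp
    also have "\<dots> = h1 p"
      unfolding h1_def X_def p(1) coeff[symmetric] split scaleR_scaleR[symmetric]
      by (simp add: scaleR_conv_of_real)
    finally show "h2 (case p of (n, i, a) \<Rightarrow> (a + i, a, n - a)) = h1 p" .
    show "(case case p of (n, i, a) \<Rightarrow> (a + i, a, n - a) of (m, a, b) \<Rightarrow> (a + b, m - a, a)) = p"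
         "(case p of (n, i, a) \<Rightarrow> (a + i, a, n - a)) \<in> S2"
      using p by (auto simp: S2_def)
  next
    fix p assume "p \<in> S2"
    then obtain m a b where p: "p = (m, a, b)" "m \<le> k" "a \<le> m" "b \<le> k - m"
      by (auto simp: S2_def)
    show "(case case p of (m, a, b) \<Rightarrow> (a + b, m - a, a) of (n, i, a) \<Rightarrow> (a + i, a, n - a)) = p"
         "(case p of (m, a, b) \<Rightarrow> (a + b, m - a, a)) \<in> S1"
      using p by (auto simp: S1_def)
  qed
  also have "\<dots> = (\<Sum>m\<le>k. \<Sum>a\<le>m. \<Sum>b\<le>k - m. h2 (m, a, b))"
    unfolding S2_def by (simp add: sum.Sigma split_def)
  also have "\<dots> = cprod (\<lambda>k. sshift \<sigma> c F k x) (\<lambda>k. sshift \<sigma> c G k x) k"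
    unfolding cprod_def sshift_def h2_def sum_product
    by (simp only: mult_scaleR_left mult_scaleR_right scaleR_scaleR split mult.commute)
  finally show ?thesis .
qed

section \<open>Reflection of formal power series\<close>

lemma Abs_fps_cprod: "Abs_fps (cprod s t) = Abs_fps s * Abs_fps t"
  by (simp add: fps_eq_iff cprod_def fps_mult_nth atLeast0AtMost)

lemma fps_compose_uminus_X_twice:
  fixes f :: "'a::idom fps"
  shows "(f oo - fps_X) oo - fps_X = f"
proof -
  have "(- fps_X :: 'a fps) oo - fps_X = fps_X"
    by (simp add: fps_compose_uminus)
  then show ?thesis
    by (simp flip: fps_compose_assoc)
qed

lemma fps_even_of_functional_equation:
  fixes a y b :: "'a::{idom, ring_char_0} fps"
  assumes eq: "a * ((y + b) * (y + (y oo - fps_X))) = fps_const lam * (y * y - 1)"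
    and y0: "fps_nth y 0 \<noteq> 0"
  shows "(a * (y + b) - fps_const lam * y) oo - fps_X = a * (y + b) - fps_const lam * y"
proof -
  define refl where "refl f = f oo - fps_X" for f :: "'a fps"
  have refl_mult: "refl (f * g) = refl f * refl g" for f g
    unfolding refl_def by (simp add: fps_compose_mult_distrib)
  have refl_refl: "refl (refl f) = f" for f
    unfolding refl_def by (rule fps_compose_uminus_X_twice)
  define D where "D = a * (y + b) - fps_const lam * y"
  define P where "P = y + refl y"
  have DP: "D * P = - fps_const lam - fps_const lam * (y * refl y)"
  proof -
    have "D * P = a * ((y + b) * (y + refl y)) - fps_const lam * (y * (y + refl y))"
      unfolding D_def P_def by (simp add: algebra_simps)
    also have "\<dots> = fps_const lam * (y * y - 1) - fps_const lam * (y * (y + refl y))"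
      using eq by (simp add: refl_def)
    finally show ?thesis by (simp add: algebra_simps)
  qed
  have "refl P = P"
    unfolding P_def refl_def by (simp add: fps_compose_add_distrib refl_refl[unfolded refl_def])
  moreover have "refl (D * P) = D * P"
    unfolding DP refl_def
    by (simp add: fps_compose_sub_distrib fps_compose_uminus fps_compose_mult_distrib
        refl_refl[unfolded refl_def] mult.commute)
  ultimately have "(refl D - D) * P = 0"
    unfolding refl_mult by (simp add: algebra_simps)
  moreover have "fps_nth P 0 \<noteq> 0"
    using y0 by (simp add: P_def refl_def)
  ultimately have "refl D = D"
    by auto
  then show ?thesis
    unfolding D_def refl_def .
qed

lemma even_series_of_functional_equation:
  fixes A Y B :: "nat \<Rightarrow> 'a::{idom, ring_char_0}"
  assumes "Y 0 \<noteq> 0"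
    and "\<And>k. cprod A (cprod (\<lambda>k. Y k + B k) (\<lambda>k. Y k + (-1) ^ k * Y k)) k
              = lam * (cprod Y Y k - (if k = 0 then 1 else 0))"
  shows "even_series (\<lambda>k. cprod A (\<lambda>k. Y k + B k) k - lam * Y k)"
proof -
  have sum: "Abs_fps (\<lambda>k. Y k + B k) = Abs_fps Y + Abs_fps B"
    by (simp add: fps_eq_iff)
  have "Abs_fps (\<lambda>k. Y k + (-1) ^ k * Y k) = Abs_fps Y + (Abs_fps Y oo - fps_X)"
    by (simp add: fps_compose_uminus' fps_eq_iff)
  moreover have "Abs_fps (cprod A (cprod (\<lambda>k. Y k + B k) (\<lambda>k. Y k + (-1) ^ k * Y k)))
      = fps_const lam * (Abs_fps Y * Abs_fps Y - 1)"
    using assms(2) by (simp add: fps_eq_iff flip: Abs_fps_cprod)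
  ultimately have "Abs_fps A * ((Abs_fps Y + Abs_fps B) * (Abs_fps Y + (Abs_fps Y oo - fps_X)))
      = fps_const lam * (Abs_fps Y * Abs_fps Y - 1)"
    by (simp add: Abs_fps_cprod sum)
  moreover define D where "D = Abs_fps (cprod A (\<lambda>k. Y k + B k)) - fps_const lam * Abs_fps Y"
  ultimately have "D oo - fps_X = D"
    unfolding D_def Abs_fps_cprod sum
    by (intro fps_even_of_functional_equation) (simp_all add: assms(1))
  then have reflected: "(-1) ^ k * fps_nth D k = fps_nth D k" for k
    by (metis fps_compose_uminus' fps_nth_Abs_fps)
  have "fps_nth D k = 0" if "odd k" for k
    using that reflected[of k] by (simp add: power_minus1_odd)
  then show ?thesis
    unfolding even_series_def by (simp add: D_def)
qed

section \<open>Independence of the functions \<open>\<lambda>\<close>, \<open>1\<close>, \<open>f\<^sub>j\<close>, \<open>g\<^sub>j\<close>\<close>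

lemma entire_eq_0_outside_ball:
  fixes f :: "complex \<Rightarrow> complex"
  assumes "f holomorphic_on UNIV" "\<And>z. \<rho> < cmod z \<Longrightarrow> f z = 0"
  shows "f w = 0"
proof (rule analytic_continuation[of f UNIV "{z. \<rho> < cmod z}" "of_real (\<bar>\<rho>\<bar> + 1)"])
  have "open {z :: complex. \<rho> < cmod z}"
    by (intro open_Collect_less continuous_intros)
  then show "of_real (\<bar>\<rho>\<bar> + 1) islimpt {z. \<rho> < cmod z}"
    by (rule open_imp_islimpt) simp
qed (use assms in auto)

lemma fj_clear_denominators:
  assumes "z \<noteq> 0" "j \<in> {1..N}"
  shows "z ^ N * (z - of_real (4 * r)) ^ N * fj r j z = (z - of_real (4 * r)) ^ (N + 1) * z ^ (N - j)"
proof -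
  have "z ^ N = z ^ (N - j) * z ^ j" using assms(2) by (simp flip: power_add)
  then show ?thesis unfolding fj_def using assms(1) by (simp add: field_simps)
qed

lemma gj_clear_denominators:
  assumes "z \<noteq> of_real (4 * r)" "j \<in> {1..N}"
  shows "z ^ N * (z - of_real (4 * r)) ^ N * gj r j z = z ^ (N + 1) * (z - of_real (4 * r)) ^ (N - j)"
proof -
  have "(z - of_real (4 * r)) ^ N = (z - of_real (4 * r)) ^ (N - j) * (z - of_real (4 * r)) ^ j"
    using assms(2) by (simp flip: power_add)
  then show ?thesis unfolding gj_def using assms(1) by (simp add: field_simps)
qed

lemma fj_gj_combination_cleared_eq_0:
  fixes r :: real and p q :: complex and u v :: "nat \<Rightarrow> complex"
  defines "R \<equiv> complex_of_real (4 * r)"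
  assumes "r > 0"
    and "\<And>z. 4 * r < cmod z \<Longrightarrow> p * z + q + (\<Sum>j\<in>{1..N}. fj r j z * u j + gj r j z * v j) = 0"
  shows "w ^ N * (w - R) ^ N * (p * w + q)
      + (\<Sum>j\<in>{1..N}. u j * ((w - R) ^ (N + 1) * w ^ (N - j)) + v j * (w ^ (N + 1) * (w - R) ^ (N - j))) = 0"
    (is "?\<Psi> w = 0")
proof (rule entire_eq_0_outside_ball[of ?\<Psi>])
  show "?\<Psi> holomorphic_on UNIV"
    by (intro holomorphic_intros)
  fix z :: complex assume z: "4 * r < cmod z"
  then have "z \<noteq> 0" "z \<noteq> R"
    using assms(2) by (auto simp: R_def)
  have summand: "z ^ N * (z - R) ^ N * (fj r j z * u j + gj r j z * v j)
      = u j * ((z - R) ^ (N + 1) * z ^ (N - j)) + v j * (z ^ (N + 1) * (z - R) ^ (N - j))"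
    if "j \<in> {1..N}" for j
  proof -
    have "z ^ N * (z - R) ^ N * (fj r j z * u j + gj r j z * v j)
        = (z ^ N * (z - R) ^ N * fj r j z) * u j + (z ^ N * (z - R) ^ N * gj r j z) * v j"
      by (simp add: algebra_simps)
    also have "\<dots> = ((z - R) ^ (N + 1) * z ^ (N - j)) * u j + (z ^ (N + 1) * (z - R) ^ (N - j)) * v j"
      unfolding R_def
      by (simp only: fj_clear_denominators[OF \<open>z \<noteq> 0\<close> that]
          gj_clear_denominators[OF \<open>z \<noteq> R\<close>[unfolded R_def] that])
    finally show ?thesis by (simp only: mult.commute)
  qed
  have "?\<Psi> z = z ^ N * (z - R) ^ N * (p * z + q + (\<Sum>j\<in>{1..N}. fj r j z * u j + gj r j z * v j))"
    unfolding distrib_left[of "z ^ N * (z - R) ^ N" "p * z + q"] sum_distrib_left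
    by (simp add: summand)
  then show "?\<Psi> z = 0"
    using assms(3)[OF z] by simp
qed

lemma fj_gj_expansion_unique:
  fixes p q :: complex and u v :: "nat \<Rightarrow> complex"
  assumes "r > 0"
    and "\<And>z. 4 * r < cmod z \<Longrightarrow> p * z + q + (\<Sum>j\<in>{1..N}. fj r j z * u j + gj r j z * v j) = 0"
  shows "p = 0 \<and> q = 0 \<and> (\<forall>j\<in>{1..N}. u j = 0 \<and> v j = 0)"
  using assms(2)
proof (induction N)
  case 0
  from fj_gj_combination_cleared_eq_0[OF assms(1) 0, of 0] fj_gj_combination_cleared_eq_0[OF assms(1) 0, of 1]
  show ?case by simp
next
  case (Suc N)
  define R where "R = complex_of_real (4 * r)"
  have "R \<noteq> 0" using assms(1) by (simp add: R_def)
  \<comment> \<open>Evaluating the cleared combination at \<open>0\<close> and at \<open>4r\<close> isolates the top coefficients.\<close>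
  have "u (Suc N) * (- R) ^ (N + 2) = 0"
  proof -
    have "(\<Sum>j\<in>{1..Suc N}. u j * ((0 - R) ^ (Suc N + 1) * 0 ^ (Suc N - j)) + v j * (0 ^ (Suc N + 1) * (0 - R) ^ (Suc N - j)))
        = (\<Sum>j\<in>{1..Suc N}. if j = Suc N then u (Suc N) * (- R) ^ (N + 2) else 0)"
      by (intro sum.cong) auto
    then show ?thesis
      using fj_gj_combination_cleared_eq_0[OF assms(1) Suc.prems, of 0] by (simp add: R_def)
  qed
  moreover have "v (Suc N) * R ^ (N + 2) = 0"
  proof -
    have "(\<Sum>j\<in>{1..Suc N}. u j * ((R - R) ^ (Suc N + 1) * R ^ (Suc N - j)) + v j * (R ^ (Suc N + 1) * (R - R) ^ (Suc N - j)))
        = (\<Sum>j\<in>{1..Suc N}. if j = Suc N then v (Suc N) * R ^ (N + 2) else 0)"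
      by (intro sum.cong) auto
    then show ?thesis
      using fj_gj_combination_cleared_eq_0[OF assms(1) Suc.prems, of R] by (simp add: R_def)
  qed
  ultimately have top: "u (Suc N) = 0" "v (Suc N) = 0"
    using \<open>R \<noteq> 0\<close> by simp_all
  have "p = 0 \<and> q = 0 \<and> (\<forall>j\<in>{1..N}. u j = 0 \<and> v j = 0)"
  proof (rule Suc.IH)
    fix z :: complex assume "4 * r < cmod z"
    then show "p * z + q + (\<Sum>j\<in>{1..N}. fj r j z * u j + gj r j z * v j) = 0"
      using Suc.prems[of z] top by simp
  qed
  then show ?case
    using top by (auto simp: le_Suc_eq)
qed

section \<open>Expansions in \<open>\<lambda>\<close>\<close>

lemma cprod_add_right: "cprod a (\<lambda>m. b m + c m) k = cprod a b k + cprod a c k"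
  by (simp add: cprod_def distrib_left sum.distrib)

lemma cprod_mult_right: "cprod a (\<lambda>m. z * b m) k = z * cprod a b k"
  by (simp add: cprod_def sum_distrib_left mult_ac)

lemma cprod_sum_right: "cprod a (\<lambda>m. \<Sum>j\<in>J. b j m) k = (\<Sum>j\<in>J. cprod a (b j) k)"
  by (simp add: cprod_def sum_distrib_left sum.swap[of _ J])

lemma cprod_delta_right: "cprod a (\<lambda>m. if m = 0 then c else 0) k = a k * c"
proof -
  have "cprod a (\<lambda>m. if m = 0 then c else 0) k = (\<Sum>i\<le>k. if i = k then a k * c else 0)"
    unfolding cprod_def by (rule sum.cong) auto
  then show ?thesis by simp
qed

lemma cprod_of_real:
  "cprod (\<lambda>m. of_real (a m)) (\<lambda>m. of_real (b m)) k = (of_real (cprod a b k) :: 'a::{real_algebra_1, comm_ring})"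
  by (simp add: cprod_def)

lemma cprod_cong_right: "(\<And>m. m \<le> k \<Longrightarrow> b m = b' m) \<Longrightarrow> cprod a b k = cprod a b' k"
  unfolding cprod_def by (rule sum.cong) auto

lemma cprod_expansion:
  fixes a s :: "nat \<Rightarrow> real" and s' s'' :: "nat \<Rightarrow> nat \<Rightarrow> real" and p q :: "nat \<Rightarrow> complex"
  assumes "\<And>m. m \<le> k \<Longrightarrow> Y m = c * ((if m = 0 then d else 0) + of_real (s m)
      + (\<Sum>j\<in>J. p j * of_real (s' j m) + q j * of_real (s'' j m)))"
  shows "cprod (\<lambda>m. of_real (a m)) Y k = c * (of_real (a k) * d + of_real (cprod a s k)
      + (\<Sum>j\<in>J. p j * of_real (cprod a (s' j) k) + q j * of_real (cprod a (s'' j) k)))"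
  by (simp add: cprod_cong_right[of k Y, OF assms] cprod_mult_right cprod_add_right cprod_sum_right
      cprod_delta_right cprod_of_real)

lemma fj_0: "fj r 0 z = z - of_real (4 * r)"
  by (simp add: fj_def)

lemma gj_0: "gj r 0 z = z"
  by (simp add: gj_def)

lemma fj_Suc: "z \<noteq> 0 \<Longrightarrow> z * fj r (Suc j) z = fj r j z"
  by (simp add: fj_def)

lemma gj_Suc: "z \<noteq> of_real (4 * r) \<Longrightarrow> (z - of_real (4 * r)) * gj r (Suc j) z = gj r j z"
  by (simp add: gj_def)

lemma sum_index_shift:
  fixes c d s :: "nat \<Rightarrow> 'a::comm_semiring_0"
  assumes "\<And>j. c (Suc j) = d j" "s (Suc n) = 0"
  shows "(\<Sum>j\<in>{1..n}. c j * s j) = d 0 * s 1 + (\<Sum>j\<in>{1..n}. d j * s (Suc j))"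
proof -
  have "(\<Sum>j\<in>{1..n}. c j * s j) = (\<Sum>j\<le>n. d j * s (Suc j))"
    using assms by (simp add: sum.atLeast1_atMost_eq lessThan_Suc_atMost[symmetric])
  also have "\<dots> = d 0 * s 1 + (\<Sum>j\<in>{1..n}. d j * s (Suc j))"
    by (simp add: atMost_atLeast0 sum.atLeast_Suc_atMost)
  finally show ?thesis .
qed

lemma sum_lambda_fj:
  assumes "z \<noteq> 0" "s (Suc N) = 0"
  shows "(\<Sum>j\<in>{1..N}. z * fj r j z * s j)
      = (z - of_real (4 * r)) * s 1 + (\<Sum>j\<in>{1..N}. fj r j z * s (Suc j))"
  using sum_index_shift[of "\<lambda>j. z * fj r j z" "\<lambda>j. fj r j z" s] assms by (simp add: fj_Suc fj_0)

lemma sum_lambda_gj: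
  assumes "z \<noteq> of_real (4 * r)" "s (Suc N) = 0"
  shows "(\<Sum>j\<in>{1..N}. z * gj r j z * s j)
      = z * s 1 + of_real (4 * r) * (\<Sum>j\<in>{1..N}. gj r j z * s j) + (\<Sum>j\<in>{1..N}. gj r j z * s (Suc j))"
proof -
  have "(\<Sum>j\<in>{1..N}. (z - of_real (4 * r)) * gj r j z * s j) = z * s 1 + (\<Sum>j\<in>{1..N}. gj r j z * s (Suc j))"
    using sum_index_shift[of "\<lambda>j. (z - of_real (4 * r)) * gj r j z" "\<lambda>j. gj r j z" s] gj_Suc[OF assms(1)] assms(2)
    by (simp add: gj_0)
  moreover have "(\<Sum>j\<in>{1..N}. z * gj r j z * s j)
      = (\<Sum>j\<in>{1..N}. (z - of_real (4 * r)) * gj r j z * s j) + of_real (4 * r) * (\<Sum>j\<in>{1..N}. gj r j z * s j)"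
    by (simp add: sum_distrib_left algebra_simps sum_subtractf)
  ultimately show ?thesis
    by simp
qed

lemma cprod_minus_lambda_expansion:
  fixes r :: real and sa s0 t0 :: "nat \<Rightarrow> real" and sA tA sB tB :: "nat \<Rightarrow> nat \<Rightarrow> real"
    and Y B :: "nat \<Rightarrow> complex"
  defines "R \<equiv> complex_of_real (4 * r)"
  assumes lam: "lam \<noteq> 0" "lam \<noteq> R" and w: "w \<noteq> 0" and k: "1 \<le> k" "k \<le> N"
    and Y: "\<And>m. m \<le> k \<Longrightarrow> Y m = (1 / w) * ((if m = 0 then lam else 0) + of_real (s0 m)
      + (\<Sum>j\<in>{1..N}. fj r j lam * of_real (sA j m) + gj r j lam * of_real (sB j m)))"
    and B: "\<And>m. m \<le> k \<Longrightarrow> B m = (1 / w) * ((if m = 0 then lam else 0) + of_real (t0 m)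
      + (\<Sum>j\<in>{1..N}. fj r j lam * of_real (tA j m) + gj r j lam * of_real (tB j m)))"
    and top: "sA (Suc N) k = 0" "sB (Suc N) k = 0"
  shows "w * (cprod (\<lambda>m. of_real (sa m)) (\<lambda>m. Y m + B m) k - lam * Y k)
      = of_real (2 * sa k - s0 k - sA 1 k - sB 1 k) * lam
        + of_real (4 * r * sA 1 k + cprod sa (\<lambda>m. s0 m + t0 m) k)
        + (\<Sum>j\<in>{1..N}. fj r j lam * of_real (cprod sa (\<lambda>m. sA j m + tA j m) k - sA (Suc j) k)
            + gj r j lam * of_real (cprod sa (\<lambda>m. sB j m + tB j m) k - 4 * r * sB j k - sB (Suc j) k))"
proof -
  have CY: "cprod (\<lambda>m. of_real (sa m)) Y k = (1 / w) * (of_real (sa k) * lam + of_real (cprod sa s0 k)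
      + (\<Sum>j\<in>{1..N}. fj r j lam * of_real (cprod sa (sA j) k) + gj r j lam * of_real (cprod sa (sB j) k)))"
    by (rule cprod_expansion) (rule Y)
  have CB: "cprod (\<lambda>m. of_real (sa m)) B k = (1 / w) * (of_real (sa k) * lam + of_real (cprod sa t0 k)
      + (\<Sum>j\<in>{1..N}. fj r j lam * of_real (cprod sa (tA j) k) + gj r j lam * of_real (cprod sa (tB j) k)))"
    by (rule cprod_expansion) (rule B)
  have Yk: "Y k = (1 / w) * (of_real (s0 k)
      + (\<Sum>j\<in>{1..N}. fj r j lam * of_real (sA j k) + gj r j lam * of_real (sB j k)))"
    using Y[of k] k(1) by simp
  have F: "(\<Sum>j\<in>{1..N}. lam * fj r j lam * of_real (sA j k))
      = (lam - R) * of_real (sA 1 k) + (\<Sum>j\<in>{1..N}. fj r j lam * of_real (sA (Suc j) k))"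
    unfolding R_def by (rule sum_lambda_fj) (simp_all add: lam(1) top)
  have G: "(\<Sum>j\<in>{1..N}. lam * gj r j lam * of_real (sB j k))
      = lam * of_real (sB 1 k) + R * (\<Sum>j\<in>{1..N}. gj r j lam * of_real (sB j k))
        + (\<Sum>j\<in>{1..N}. gj r j lam * of_real (sB (Suc j) k))"
    unfolding R_def by (rule sum_lambda_gj) (use lam(2) top in \<open>simp_all add: R_def\<close>)
  have "w * (cprod (\<lambda>m. of_real (sa m)) (\<lambda>m. Y m + B m) k - lam * Y k)
      = of_real (sa k) * (2 * lam) + of_real (cprod sa (\<lambda>m. s0 m + t0 m) k)
        + (\<Sum>j\<in>{1..N}. fj r j lam * of_real (cprod sa (\<lambda>m. sA j m + tA j m) k)
            + gj r j lam * of_real (cprod sa (\<lambda>m. sB j m + tB j m) k))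
        - lam * of_real (s0 k)
        - (\<Sum>j\<in>{1..N}. lam * fj r j lam * of_real (sA j k))
        - (\<Sum>j\<in>{1..N}. lam * gj r j lam * of_real (sB j k))"
    unfolding cprod_add_right CY CB Yk
    using w by (simp add: field_simps sum.distrib sum_distrib_left cprod_add_right)
  also have "\<dots> = of_real (2 * sa k - s0 k - sA 1 k - sB 1 k) * lam
        + of_real (4 * r * sA 1 k + cprod sa (\<lambda>m. s0 m + t0 m) k)
        + (\<Sum>j\<in>{1..N}. fj r j lam * of_real (cprod sa (\<lambda>m. sA j m + tA j m) k - sA (Suc j) k)
            + gj r j lam * of_real (cprod sa (\<lambda>m. sB j m + tB j m) k - 4 * r * sB j k - sB (Suc j) k))"
    unfolding F G R_def by (simp add: algebra_simps sum.distrib sum_subtractf sum_distrib_left)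
  finally show ?thesis .
qed

lemma bounded_linear_scaled_of_real: "bounded_linear (\<lambda>t. p * of_real t :: 'a::real_normed_algebra_1)"
  by (intro bounded_linear_compose[OF bounded_linear_mult_right] bounded_linear_of_real)

lemma smooth_on_expansion:
  fixes h0 :: "real \<Rightarrow> real" and h1 h2 :: "nat \<Rightarrow> real \<Rightarrow> real" and c d :: complex
  assumes "open I" "finite J" "smooth_on I h0"
    "\<And>j. j \<in> J \<Longrightarrow> smooth_on I (h1 j)" "\<And>j. j \<in> J \<Longrightarrow> smooth_on I (h2 j)"
  shows "smooth_on I (\<lambda>y. c * (d + of_real (h0 y) + (\<Sum>j\<in>J. p j * of_real (h1 j y) + q j * of_real (h2 j y))))"
  by (intro smooth_on_linear[OF assms(1) _ bounded_linear_mult_right] smooth_on_add[OF assms(1)]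
      smooth_on_sum[OF assms(1,2)] smooth_on_const
      smooth_on_linear[OF assms(1) assms(3) bounded_linear_of_real]
      smooth_on_linear[OF assms(1) assms(4) bounded_linear_scaled_of_real]
      smooth_on_linear[OF assms(1) assms(5) bounded_linear_scaled_of_real])

lemma sshift_expansion:
  fixes h0 :: "nat \<Rightarrow> real \<Rightarrow> real" and h1 h2 :: "nat \<Rightarrow> nat \<Rightarrow> real \<Rightarrow> real" and c :: complex
  assumes I: "open I" "x \<in> I" and J: "finite J" and h0: "\<And>m. smooth_on I (h0 m)"
    and h1: "\<And>j m. j \<in> J \<Longrightarrow> smooth_on I (h1 j m)" and h2: "\<And>j m. j \<in> J \<Longrightarrow> smooth_on I (h2 j m)"
  shows "sshift \<sigma> \<gamma> (\<lambda>m y. c * ((if m = 0 then d else 0) + of_real (h0 m y)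
      + (\<Sum>j\<in>J. p j * of_real (h1 j m y) + q j * of_real (h2 j m y)))) k x
   = c * ((if k = 0 then d else 0) + of_real (sshift \<sigma> \<gamma> h0 k x)
      + (\<Sum>j\<in>J. p j * of_real (sshift \<sigma> \<gamma> (h1 j) k x) + q j * of_real (sshift \<sigma> \<gamma> (h2 j) k x)))"
proof -
  have s1: "smooth_on I (\<lambda>y. p j * of_real (h1 j m y))" "smooth_on I (\<lambda>y. q j * of_real (h2 j m y))"
    if "j \<in> J" for j m
    using smooth_on_linear[OF I(1) h1[OF that] bounded_linear_scaled_of_real]
      smooth_on_linear[OF I(1) h2[OF that] bounded_linear_scaled_of_real] by auto
  have s2: "smooth_on I (\<lambda>y. p j * of_real (h1 j m y) + q j * of_real (h2 j m y))" if "j \<in> J" for j m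
    using smooth_on_add[OF I(1) s1[OF that]] .
  have s3: "smooth_on I (\<lambda>y. \<Sum>j\<in>J. p j * of_real (h1 j m y) + q j * of_real (h2 j m y))" for m
    by (rule smooth_on_sum[OF I(1) J s2])
  have s4: "smooth_on I (\<lambda>y. (if m = 0 then d else 0) + of_real (h0 m y))" for m
    by (rule smooth_on_add[OF I(1) smooth_on_const smooth_on_linear[OF I(1) h0 bounded_linear_of_real]])
  have s5: "smooth_on I (\<lambda>y. (if m = 0 then d else 0) + of_real (h0 m y)
      + (\<Sum>j\<in>J. p j * of_real (h1 j m y) + q j * of_real (h2 j m y)))" for m
    by (rule smooth_on_add[OF I(1) s4 s3])
  have "sshift \<sigma> \<gamma> (\<lambda>m y. (if m = 0 then d else 0) + of_real (h0 m y)) k x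
      = (if k = 0 then d else 0) + of_real (sshift \<sigma> \<gamma> h0 k x)"
    by (simp add: sshift_add[OF I smooth_on_const smooth_on_linear[OF I(1) h0 bounded_linear_of_real]]
        sshift_const sshift_linear[OF I h0 bounded_linear_of_real])
  moreover have "sshift \<sigma> \<gamma> (\<lambda>m y. p j * of_real (h1 j m y) + q j * of_real (h2 j m y)) k x
      = p j * of_real (sshift \<sigma> \<gamma> (h1 j) k x) + q j * of_real (sshift \<sigma> \<gamma> (h2 j) k x)" if "j \<in> J" for j
    by (simp add: sshift_add[OF I s1[OF that]] sshift_linear[OF I h1[OF that] bounded_linear_scaled_of_real]
        sshift_linear[OF I h2[OF that] bounded_linear_scaled_of_real])
  ultimately show ?thesis
    by (simp add: sshift_linear[OF I s5 bounded_linear_mult_right] sshift_add[OF I s4 s3]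
        sshift_sum[OF I J s2])
qed

text \<open>At \<open>x - \<epsilon>/2\<close> the two shifted copies \<open>V(-\<epsilon>; x \<mp> \<epsilon>)\<close> become
  \<open>B(\<epsilon>) = V(-\<epsilon>; x - 3\<epsilon>/2)\<close> and \<open>V(-\<epsilon>; x + \<epsilon>/2) = Y(-\<epsilon>)\<close>, where \<open>Y(\<epsilon>) = V(\<epsilon>; x - \<epsilon>/2)\<close>.\<close>

lemma shifted_functional_equation:
  fixes A V :: "nat \<Rightarrow> real \<Rightarrow> complex"
  assumes I: "open I" "x \<in> I" and A: "\<And>m. smooth_on I (A m)" and V: "\<And>m. smooth_on I (V m)"
    and eq: "\<And>y. y \<in> I \<Longrightarrow>
        cprod (\<lambda>k. A k y) (cprod (\<lambda>k. V k y + sshift (-1) (-1) V k y) (\<lambda>k. V k y + sshift (-1) 1 V k y))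
        = (\<lambda>k. lam * (cprod (\<lambda>k. V k y) (\<lambda>k. V k y) k - (if k = 0 then 1 else 0)))"
  defines "Y \<equiv> \<lambda>k. sshift 1 (-1/2) V k x" and "B \<equiv> \<lambda>k. sshift (-1) (-3/2) V k x"
  shows "cprod (\<lambda>k. sshift 1 (-1/2) A k x) (cprod (\<lambda>k. Y k + B k) (\<lambda>k. Y k + (-1) ^ k * Y k)) k
       = lam * (cprod Y Y k - (if k = 0 then 1 else 0))"
proof -
  define M where "M = (\<lambda>m y. V m y + sshift (-1) (-1) V m y)"
  define P where "P = (\<lambda>m y. V m y + sshift (-1) 1 V m y)"
  define VV where "VV = (\<lambda>m y. cprod (\<lambda>k. V k y) (\<lambda>k. V k y) m)"
  have M: "smooth_on I (M m)" and P: "smooth_on I (P m)" for m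
    unfolding M_def P_def by (intro smooth_on_add[OF I(1) V smooth_on_sshift[OF I(1) V]])+
  have VV: "smooth_on I (VV m)" for m
    unfolding VV_def by (rule smooth_on_cprod[OF I(1) V V])
  have "sshift 1 (-1/2) M m x = Y m + B m" for m
    unfolding M_def Y_def B_def by (simp add: sshift_add[OF I V smooth_on_sshift[OF I(1) V]] sshift_sshift[OF I V])
  moreover have "sshift 1 (-1/2) P m x = Y m + (-1) ^ m * Y m" for m
  proof -
    have "sshift 1 (-1/2) (sshift (-1) 1 V) m x = sshift (- 1) (- (- 1/2)) V m x"
      by (simp add: sshift_sshift[OF I V])
    also have "\<dots> = (-1) ^ m * Y m"
      unfolding Y_def sshift_uminus by (simp add: scaleR_conv_of_real)
    finally show ?thesis
      unfolding P_def Y_def by (simp add: sshift_add[OF I V smooth_on_sshift[OF I(1) V]])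
  qed
  moreover have "sshift 1 (-1/2) (\<lambda>m y. lam * (VV m y + - (if m = 0 then 1 else 0))) k x
      = lam * (cprod Y Y k - (if k = 0 then 1 else 0))"
  proof -
    have "sshift 1 (-1/2) (\<lambda>m y. lam * (VV m y + - (if m = 0 then 1 else 0))) k x
        = lam * sshift 1 (-1/2) (\<lambda>m y. VV m y + - (if m = 0 then 1 else 0)) k x"
      by (rule sshift_linear[OF I smooth_on_add[OF I(1) VV smooth_on_const] bounded_linear_mult_right])
    also have "sshift 1 (-1/2) (\<lambda>m y. VV m y + - (if m = 0 then 1 else 0)) k x
        = sshift 1 (-1/2) VV k x + sshift 1 (-1/2) (\<lambda>m y. - (if m = 0 then 1 else 0)) k x"
      by (rule sshift_add[OF I VV smooth_on_const])
    finally show ?thesis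
      unfolding VV_def Y_def sshift_cprod[OF I V V] sshift_const by simp
  qed
  moreover have "sshift 1 (-1/2) (\<lambda>m y. cprod (\<lambda>k. A k y) (\<lambda>k. cprod (\<lambda>k. M k y) (\<lambda>k. P k y) k) m) k x
      = sshift 1 (-1/2) (\<lambda>m y. lam * (VV m y + - (if m = 0 then 1 else 0))) k x"
    by (rule sshift_cong[OF I]) (use eq in \<open>simp add: M_def P_def VV_def\<close>)
  ultimately show ?thesis
    by (simp add: sshift_cprod[OF I A smooth_on_cprod[OF I(1) M P]] sshift_cprod[OF I M P])
qed

lemma outside_disc_nonzero:
  assumes "0 \<le> r" "4 * r < cmod lam"
  shows "lam \<noteq> 0" "lam \<noteq> of_real (4 * r)" "wc r lam \<noteq> 0"
proof -
  show "lam \<noteq> 0" "lam \<noteq> of_real (4 * r)"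
    using assms by auto
  then have "1 - complex_of_real (4 * r) / lam \<noteq> 0"
    by (simp add: field_simps)
  then show "wc r lam \<noteq> 0"
    using \<open>lam \<noteq> 0\<close> by (simp add: wc_def)
qed

section \<open>The functional equation and its expansion\<close>

locale V_functional_equation =
  fixes r :: real and I :: "real set" and a :: "nat \<Rightarrow> real \<Rightarrow> real"
    and V :: "nat \<Rightarrow> complex \<Rightarrow> real \<Rightarrow> complex"
    and V0 :: "nat \<Rightarrow> real \<Rightarrow> real" and V0j V1j :: "nat \<Rightarrow> nat \<Rightarrow> real \<Rightarrow> real"
  assumes r_pos: "r > 0"
    and open_I: "open I"
    and a_smooth: "\<And>k. smooth_on I (a k)"
    and V0_smooth: "\<And>k. smooth_on I (V0 k)"
    and V0j_smooth: "\<And>j k. j \<ge> 1 \<Longrightarrow> smooth_on I (V0j j k)"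
    and V1j_smooth: "\<And>j k. j \<ge> 1 \<Longrightarrow> smooth_on I (V1j j k)"
    and V0j_O: "\<And>j k x. j \<ge> 1 \<Longrightarrow> k < 2 * j \<Longrightarrow> x \<in> I \<Longrightarrow> V0j j k x = 0"
    and V1j_O: "\<And>j k x. j \<ge> 1 \<Longrightarrow> k < 2 * j \<Longrightarrow> x \<in> I \<Longrightarrow> V1j j k x = 0"
    and V_zero: "\<And>lam x. cmod lam > 4 * r \<Longrightarrow> x \<in> I \<Longrightarrow> V 0 lam x = lam / wc r lam"
    and V_repr: "\<And>k lam x. cmod lam > 4 * r \<Longrightarrow> x \<in> I \<Longrightarrow>
        V k lam x = (1 / wc r lam) * ((if k = 0 then lam else 0) + complex_of_real (V0 k x)
          + (\<Sum>j\<in>{1..k}. fj r j lam * complex_of_real (V0j j k x)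
                          + gj r j lam * complex_of_real (V1j j k x)))"
    and V_eq: "\<And>lam x. cmod lam > 4 * r \<Longrightarrow> x \<in> I \<Longrightarrow>
        cprod (\<lambda>k. complex_of_real (a k x))
          (cprod (\<lambda>k. V k lam x + sshift (-1) (-1) (\<lambda>k. V k lam) k x)
                 (\<lambda>k. V k lam x + sshift (-1) 1 (\<lambda>k. V k lam) k x))
        = (\<lambda>k. lam * (cprod (\<lambda>k. V k lam x) (\<lambda>k. V k lam x) k - (if k = 0 then 1 else 0)))"
begin

lemma V_expansion_upto:
  assumes "4 * r < cmod lam" "y \<in> I" "m \<le> N"
  shows "V m lam y = (1 / wc r lam) * ((if m = 0 then lam else 0) + of_real (V0 m y)
    + (\<Sum>j\<in>{1..N}. fj r j lam * of_real (V0j j m y) + gj r j lam * of_real (V1j j m y)))"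
proof -
  have "(\<Sum>j\<in>{1..m}. fj r j lam * of_real (V0j j m y) + gj r j lam * of_real (V1j j m y))
      = (\<Sum>j\<in>{1..N}. fj r j lam * of_real (V0j j m y) + gj r j lam * of_real (V1j j m y))"
    by (rule sum.mono_neutral_left) (use assms V0j_O V1j_O in auto)
  then show ?thesis
    using V_repr[OF assms(1,2)] by simp
qed

lemma V_smooth:
  assumes "4 * r < cmod lam"
  shows "smooth_on I (V m lam)"
proof (rule smooth_on_cong[OF open_I])
  show "smooth_on I (\<lambda>y. (1 / wc r lam) * ((if m = 0 then lam else 0) + of_real (V0 m y)
    + (\<Sum>j\<in>{1..m}. fj r j lam * of_real (V0j j m y) + gj r j lam * of_real (V1j j m y))))"
    by (rule smooth_on_expansion[OF open_I finite_atLeastAtMost V0_smooth]) (auto intro: V0j_smooth V1j_smooth)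
qed (simp add: V_repr[OF assms])

lemma sshift_V_expansion:
  assumes "4 * r < cmod lam" "x \<in> I" "m \<le> N"
  shows "sshift \<sigma> \<gamma> (\<lambda>m. V m lam) m x = (1 / wc r lam) * ((if m = 0 then lam else 0)
    + of_real (sshift \<sigma> \<gamma> V0 m x)
    + (\<Sum>j\<in>{1..N}. fj r j lam * of_real (sshift \<sigma> \<gamma> (V0j j) m x)
                   + gj r j lam * of_real (sshift \<sigma> \<gamma> (V1j j) m x)))"
proof -
  have "sshift \<sigma> \<gamma> (\<lambda>m. V m lam) m x = sshift \<sigma> \<gamma> (\<lambda>m y. (1 / wc r lam) * ((if m = 0 then lam else 0)
      + of_real (V0 m y)
      + (\<Sum>j\<in>{1..N}. fj r j lam * of_real (V0j j m y) + gj r j lam * of_real (V1j j m y)))) m x"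
    by (rule sshift_cong[OF open_I assms(2)], rule V_expansion_upto[OF assms(1)]) (use assms in auto)
  also have "\<dots> = (1 / wc r lam) * ((if m = 0 then lam else 0) + of_real (sshift \<sigma> \<gamma> V0 m x)
      + (\<Sum>j\<in>{1..N}. fj r j lam * of_real (sshift \<sigma> \<gamma> (V0j j) m x)
                     + gj r j lam * of_real (sshift \<sigma> \<gamma> (V1j j) m x)))"
    by (rule sshift_expansion[OF open_I assms(2) finite_atLeastAtMost V0_smooth])
      (auto intro: V0j_smooth V1j_smooth)
  finally show ?thesis .
qed

lemma sshift_V0j_V1j_low_order:
  assumes "x \<in> I" "j \<ge> 1" "k < 2 * j"
  shows "sshift \<sigma> \<gamma> (V0j j) k x = 0" "sshift \<sigma> \<gamma> (V1j j) k x = 0"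
  using assms by (auto intro!: sshift_eq_0[OF open_I] V0j_O V1j_O)

lemma even_cprod_minus_lambda:
  assumes lam: "4 * r < cmod lam" and x: "x \<in> I"
  defines "Y \<equiv> \<lambda>k. sshift 1 (-1/2) (\<lambda>m. V m lam) k x" and "B \<equiv> \<lambda>k. sshift (-1) (-3/2) (\<lambda>m. V m lam) k x"
  shows "even_series (\<lambda>k. cprod (\<lambda>k. of_real (sshift 1 (-1/2) a k x)) (\<lambda>k. Y k + B k) k - lam * Y k)"
proof (rule even_series_of_functional_equation)
  show "Y 0 \<noteq> 0"
    using outside_disc_nonzero[OF less_imp_le[OF r_pos] lam] by (simp add: Y_def sshift_def V_zero[OF lam x])
  have a_shift: "sshift 1 (-1/2) (\<lambda>k y. complex_of_real (a k y)) k x = of_real (sshift 1 (-1/2) a k x)" for k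
    by (rule sshift_linear[OF open_I x a_smooth bounded_linear_of_real])
  show "cprod (\<lambda>k. of_real (sshift 1 (-1/2) a k x)) (cprod (\<lambda>k. Y k + B k) (\<lambda>k. Y k + (-1) ^ k * Y k)) k
      = lam * (cprod Y Y k - (if k = 0 then 1 else 0))" for k
    using shifted_functional_equation[OF open_I x smooth_on_linear[OF open_I a_smooth bounded_linear_of_real]
        V_smooth[OF lam] V_eq[OF lam]]
    unfolding Y_def B_def a_shift .
qed

lemma odd_coefficient_identity:
  assumes lam: "4 * r < cmod lam" and x: "x \<in> I" and k: "odd k" "k \<le> N"
  defines "sa \<equiv> \<lambda>k. sshift 1 (-1/2) a k x"
    and "s0 \<equiv> \<lambda>k. sshift 1 (-1/2) V0 k x" and "t0 \<equiv> \<lambda>k. sshift (-1) (-3/2) V0 k x"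
    and "sA \<equiv> \<lambda>j k. sshift 1 (-1/2) (V0j j) k x" and "tA \<equiv> \<lambda>j k. sshift (-1) (-3/2) (V0j j) k x"
    and "sB \<equiv> \<lambda>j k. sshift 1 (-1/2) (V1j j) k x" and "tB \<equiv> \<lambda>j k. sshift (-1) (-3/2) (V1j j) k x"
  shows "of_real (2 * sa k - s0 k - sA 1 k - sB 1 k) * lam
        + of_real (4 * r * sA 1 k + cprod sa (\<lambda>m. s0 m + t0 m) k)
        + (\<Sum>j\<in>{1..N}. fj r j lam * of_real (cprod sa (\<lambda>m. sA j m + tA j m) k - sA (Suc j) k)
            + gj r j lam * of_real (cprod sa (\<lambda>m. sB j m + tB j m) k - 4 * r * sB j k - sB (Suc j) k)) = 0"
proof -
  define Y where "Y = (\<lambda>k. sshift 1 (-1/2) (\<lambda>m. V m lam) k x)"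
  define B where "B = (\<lambda>k. sshift (-1) (-3/2) (\<lambda>m. V m lam) k x)"
  have "cprod (\<lambda>k. of_real (sa k)) (\<lambda>k. Y k + B k) k - lam * Y k = 0"
    using even_cprod_minus_lambda[OF lam x] k(1) by (simp add: even_series_def sa_def Y_def B_def)
  moreover have "wc r lam * (cprod (\<lambda>m. of_real (sa m)) (\<lambda>m. Y m + B m) k - lam * Y k)
      = of_real (2 * sa k - s0 k - sA 1 k - sB 1 k) * lam
        + of_real (4 * r * sA 1 k + cprod sa (\<lambda>m. s0 m + t0 m) k)
        + (\<Sum>j\<in>{1..N}. fj r j lam * of_real (cprod sa (\<lambda>m. sA j m + tA j m) k - sA (Suc j) k)
            + gj r j lam * of_real (cprod sa (\<lambda>m. sB j m + tB j m) k - 4 * r * sB j k - sB (Suc j) k))"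
  proof (rule cprod_minus_lambda_expansion)
    show "1 \<le> k" "k \<le> N" using k by (auto elim: oddE)
    show "Y m = (1 / wc r lam) * ((if m = 0 then lam else 0) + of_real (s0 m)
      + (\<Sum>j\<in>{1..N}. fj r j lam * of_real (sA j m) + gj r j lam * of_real (sB j m)))"
      "B m = (1 / wc r lam) * ((if m = 0 then lam else 0) + of_real (t0 m)
      + (\<Sum>j\<in>{1..N}. fj r j lam * of_real (tA j m) + gj r j lam * of_real (tB j m)))" if "m \<le> k" for m
      unfolding Y_def B_def s0_def sA_def sB_def t0_def tA_def tB_def
      by (simp_all add: sshift_V_expansion[OF lam x order.trans[OF that k(2)]])
    show "sA (Suc N) k = 0" "sB (Suc N) k = 0"
      unfolding sA_def sB_def using k(2) by (simp_all add: sshift_V0j_V1j_low_order[OF x])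
  qed (use outside_disc_nonzero[OF less_imp_le[OF r_pos] lam] in auto)
  ultimately show ?thesis
    by simp
qed

lemma odd_coefficients_vanish:
  assumes x: "x \<in> I" and k: "odd k" and j: "1 \<le> j"
  defines "sa \<equiv> \<lambda>k. sshift 1 (-1/2) a k x"
    and "s0 \<equiv> \<lambda>k. sshift 1 (-1/2) V0 k x" and "t0 \<equiv> \<lambda>k. sshift (-1) (-3/2) V0 k x"
    and "sA \<equiv> \<lambda>j k. sshift 1 (-1/2) (V0j j) k x" and "tA \<equiv> \<lambda>j k. sshift (-1) (-3/2) (V0j j) k x"
    and "sB \<equiv> \<lambda>j k. sshift 1 (-1/2) (V1j j) k x" and "tB \<equiv> \<lambda>j k. sshift (-1) (-3/2) (V1j j) k x"
  shows "s0 k + sA 1 k + sB 1 k - 2 * sa k = 0"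
    and "4 * r * sA 1 k + cprod sa (\<lambda>m. s0 m + t0 m) k = 0"
    and "sA (j + 1) k - cprod sa (\<lambda>m. sA j m + tA j m) k = 0"
    and "4 * r * sB j k + sB (j + 1) k - cprod sa (\<lambda>m. sB j m + tB j m) k = 0"
proof -
  \<comment> \<open>Any truncation order \<open>N \<ge> k\<close> is allowed; \<open>N \<ge> j\<close> brings the \<open>j\<close>-th coefficients in.\<close>
  define N where "N = max j k"
  have "of_real (2 * sa k - s0 k - sA 1 k - sB 1 k) = (0::complex)
      \<and> of_real (4 * r * sA 1 k + cprod sa (\<lambda>m. s0 m + t0 m) k) = (0::complex)
      \<and> (\<forall>i\<in>{1..N}. of_real (cprod sa (\<lambda>m. sA i m + tA i m) k - sA (Suc i) k) = (0::complex)
          \<and> of_real (cprod sa (\<lambda>m. sB i m + tB i m) k - 4 * r * sB i k - sB (Suc i) k) = (0::complex))"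
    unfolding sa_def s0_def t0_def sA_def tA_def sB_def tB_def
    by (rule fj_gj_expansion_unique[OF r_pos odd_coefficient_identity[OF _ x k]]) (simp_all add: N_def)
  then have "2 * sa k - s0 k - sA 1 k - sB 1 k = 0
      \<and> 4 * r * sA 1 k + cprod sa (\<lambda>m. s0 m + t0 m) k = 0
      \<and> (\<forall>i\<in>{1..N}. cprod sa (\<lambda>m. sA i m + tA i m) k - sA (Suc i) k = 0
          \<and> cprod sa (\<lambda>m. sB i m + tB i m) k - 4 * r * sB i k - sB (Suc i) k = 0)"
    unfolding of_real_eq_0_iff .
  moreover have "j \<in> {1..N}"
    using j by (simp add: N_def)
  ultimately have "2 * sa k - s0 k - sA 1 k - sB 1 k = 0"
    and "4 * r * sA 1 k + cprod sa (\<lambda>m. s0 m + t0 m) k = 0"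
    and "cprod sa (\<lambda>m. sA j m + tA j m) k - sA (j + 1) k = 0"
    and "cprod sa (\<lambda>m. sB j m + tB j m) k - 4 * r * sB j k - sB (j + 1) k = 0"
    by auto
  then show "s0 k + sA 1 k + sB 1 k - 2 * sa k = 0"
    and "4 * r * sA 1 k + cprod sa (\<lambda>m. s0 m + t0 m) k = 0"
    and "sA (j + 1) k - cprod sa (\<lambda>m. sA j m + tA j m) k = 0"
    and "4 * r * sB j k + sB (j + 1) k - cprod sa (\<lambda>m. sB j m + tB j m) k = 0"
    by linarith+
qed

lemma even_coefficient_series:
  "\<forall>x\<in>I.
      even_series (\<lambda>k. sshift 1 (-1/2) V0 k x + sshift 1 (-1/2) (V0j 1) k x
                        + sshift 1 (-1/2) (V1j 1) k x - 2 * sshift 1 (-1/2) a k x)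
    \<and> even_series (\<lambda>k. 4 * r * sshift 1 (-1/2) (V0j 1) k x
          + cprod (\<lambda>k. sshift 1 (-1/2) a k x)
                  (\<lambda>k. sshift 1 (-1/2) V0 k x + sshift (-1) (-3/2) V0 k x) k)
    \<and> (\<forall>j\<ge>1. even_series (\<lambda>k. sshift 1 (-1/2) (V0j (j + 1)) k x
          - cprod (\<lambda>k. sshift 1 (-1/2) a k x)
                  (\<lambda>k. sshift 1 (-1/2) (V0j j) k x + sshift (-1) (-3/2) (V0j j) k x) k))
    \<and> (\<forall>j\<ge>1. even_series (\<lambda>k. 4 * r * sshift 1 (-1/2) (V1j j) k x
          + sshift 1 (-1/2) (V1j (j + 1)) k x
          - cprod (\<lambda>k. sshift 1 (-1/2) a k x)
                  (\<lambda>k. sshift 1 (-1/2) (V1j j) k x + sshift (-1) (-3/2) (V1j j) k x) k))"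
  unfolding even_series_def
  using odd_coefficients_vanish[of _ _ 1] odd_coefficients_vanish by auto

end

theorem proposition2:
  fixes r :: real and I :: "real set"
    and a :: "nat \<Rightarrow> real \<Rightarrow> real"
    and V :: "nat \<Rightarrow> complex \<Rightarrow> real \<Rightarrow> complex"
    and V0 :: "nat \<Rightarrow> real \<Rightarrow> real"
    and V0j :: "nat \<Rightarrow> nat \<Rightarrow> real \<Rightarrow> real"
    and V1j :: "nat \<Rightarrow> nat \<Rightarrow> real \<Rightarrow> real"
  assumes r_pos: "r > 0"
    and I_interval: "is_interval I" "open I" "I \<noteq> {}"
    and a0: "a 0 = (\<lambda>_. r)"
    and a_smooth: "\<And>k. smooth_on I (a k)"
    and V0_smooth: "\<And>k. smooth_on I (V0 k)"
    and V0j_smooth: "\<And>j k. j \<ge> 1 \<Longrightarrow> smooth_on I (V0j j k)"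
    and V1j_smooth: "\<And>j k. j \<ge> 1 \<Longrightarrow> smooth_on I (V1j j k)"
    and V0_O: "\<And>x. x \<in> I \<Longrightarrow> V0 0 x = 0"
    and V0j_O: "\<And>j k x. j \<ge> 1 \<Longrightarrow> k < 2 * j \<Longrightarrow> x \<in> I \<Longrightarrow> V0j j k x = 0"
    and V1j_O: "\<And>j k x. j \<ge> 1 \<Longrightarrow> k < 2 * j \<Longrightarrow> x \<in> I \<Longrightarrow> V1j j k x = 0"
    and V_zero: "\<And>lam x. cmod lam > 4 * r \<Longrightarrow> x \<in> I \<Longrightarrow> V 0 lam x = lam / wc r lam"
    and V_repr: "\<And>k lam x. cmod lam > 4 * r \<Longrightarrow> x \<in> I \<Longrightarrow>
        V k lam x = (1 / wc r lam) * ((if k = 0 then lam else 0) + complex_of_real (V0 k x)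
          + (\<Sum>j\<in>{1..k}. fj r j lam * complex_of_real (V0j j k x)
                          + gj r j lam * complex_of_real (V1j j k x)))"
    and V_eq: "\<And>lam x. cmod lam > 4 * r \<Longrightarrow> x \<in> I \<Longrightarrow>
        cprod (\<lambda>k. complex_of_real (a k x))
          (cprod (\<lambda>k. V k lam x + sshift (-1) (-1) (\<lambda>k. V k lam) k x)
                 (\<lambda>k. V k lam x + sshift (-1) 1 (\<lambda>k. V k lam) k x))
        = (\<lambda>k. lam * (cprod (\<lambda>k. V k lam x) (\<lambda>k. V k lam x) k - (if k = 0 then 1 else 0)))"
  shows "\<forall>x\<in>I.
      even_series (\<lambda>k. sshift 1 (-1/2) V0 k x + sshift 1 (-1/2) (V0j 1) k x
                        + sshift 1 (-1/2) (V1j 1) k x - 2 * sshift 1 (-1/2) a k x)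
    \<and> even_series (\<lambda>k. 4 * r * sshift 1 (-1/2) (V0j 1) k x
          + cprod (\<lambda>k. sshift 1 (-1/2) a k x)
                  (\<lambda>k. sshift 1 (-1/2) V0 k x + sshift (-1) (-3/2) V0 k x) k)
    \<and> (\<forall>j\<ge>1. even_series (\<lambda>k. sshift 1 (-1/2) (V0j (j + 1)) k x
          - cprod (\<lambda>k. sshift 1 (-1/2) a k x)
                  (\<lambda>k. sshift 1 (-1/2) (V0j j) k x + sshift (-1) (-3/2) (V0j j) k x) k))
    \<and> (\<forall>j\<ge>1. even_series (\<lambda>k. 4 * r * sshift 1 (-1/2) (V1j j) k x
          + sshift 1 (-1/2) (V1j (j + 1)) k x
          - cprod (\<lambda>k. sshift 1 (-1/2) a k x)
                  (\<lambda>k. sshift 1 (-1/2) (V1j j) k x + sshift (-1) (-3/2) (V1j j) k x) k))"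
proof -
  interpret V_functional_equation r I a V V0 V0j V1j
    by unfold_locales
      (fact r_pos I_interval(2) a_smooth V0_smooth V0j_smooth V1j_smooth V0j_O V1j_O V_zero V_repr V_eq)+
  show ?thesis
    by (rule even_coefficient_series)
qed

end
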